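(* If $u,v$ are distinct terms in $T_1^\circ$, then in $B_\bullet$ the element $u(1)^{-1}v(1)$ does not belong to the image $\mathrm{Im}\,\partial$ of $\partial$.
   Context: $T_1^\circ$ is the set of terms in a single variable $x$ built with a binary operator $\circ$. The group $B_\bullet$ is generated by $\sigma_1,\sigma_2,\dots$ and $a_1,a_2,\dots$ subject to: $\sigma_j\sigma_i=\sigma_i\sigma_j$ and $a_j\sigma_i=\sigma_ia_j$ for $j\ge i+2$; $a_j\sigma_i=\sigma_{i+1}a_j$ and $a_ja_i=a_{i+1}a_j$ for $j\le i-1$; $\sigma_j\sigma_i\sigma_j=\sigma_i\sigma_j\sigma_i$, $\sigma_i\sigma_ja_i=a_j\sigma_i$ and $\sigma_j\sigma_ia_j=a_i\sigma_i$ for $j=i+1$. $\partial$ is the endomorphism of $B_\bullet$ with $\partial\sigma_i=\sigma_{i+1}$, $\partial a_i=a_{i+1}$. The operation $\circ$ on $B_\bullet$ is $\beta\circ\gamma=\beta\cdot\partial\gamma\cdot a_1$, and for $v\in T_1^\circ$, $v(1)$ is its evaluation at the identity $1$: $x(1)=1$ and $(v_1\circ v_2)(1)=v_1(1)\cdot\partial v_2(1)\cdot a_1$. *)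

theory Defs
  imports Main
begin

text \<open>Generators of B_bullet. Indices are shifted by one:
  S i stands for sigma_(i+1), A i stands for a_(i+1), so S 0 = sigma_1, A 0 = a_1.\<close>
datatype gen = S nat | A nat

text \<open>Group words: letters (g, True) = g, (g, False) = g^-1.\<close>
type_synonym word = "(gen \<times> bool) list"

definition winv :: "word \<Rightarrow> word" where
  "winv w = rev (map (\<lambda>(g, b). (g, \<not> b)) w)"

fun gshift :: "gen \<Rightarrow> gen" where
  "gshift (S i) = S (Suc i)"
| "gshift (A i) = A (Suc i)"

definition dshift :: "word \<Rightarrow> word" where
  "dshift w = map (\<lambda>(g, b). (gshift g, b)) w"

definition pw :: "gen list \<Rightarrow> word" where
  "pw gs = map (\<lambda>g. (g, True)) gs"

text \<open>Defining relations of B_bullet (in shifted indices; the conditions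
  j >= i+2, j <= i-1, j = i+1 are invariant under the shift).\<close>
inductive brel :: "word \<Rightarrow> word \<Rightarrow> bool" where
  r1: "j \<ge> i + 2 \<Longrightarrow> brel (pw [S j, S i]) (pw [S i, S j])"
| r2: "j \<ge> i + 2 \<Longrightarrow> brel (pw [A j, S i]) (pw [S i, A j])"
| r3: "j + 1 \<le> i \<Longrightarrow> brel (pw [A j, S i]) (pw [S (i + 1), A j])"
| r4: "j + 1 \<le> i \<Longrightarrow> brel (pw [A j, A i]) (pw [A (i + 1), A j])"
| r5: "j = i + 1 \<Longrightarrow> brel (pw [S j, S i, S j]) (pw [S i, S j, S i])"
| r6: "j = i + 1 \<Longrightarrow> brel (pw [S i, S j, A i]) (pw [A j, S i])"
| r7: "j = i + 1 \<Longrightarrow> brel (pw [S j, S i, A j]) (pw [A i, S i])"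

inductive beq :: "word \<Rightarrow> word \<Rightarrow> bool" where
  refl: "beq w w"
| sym: "beq w v \<Longrightarrow> beq v w"
| trans: "beq u v \<Longrightarrow> beq v w \<Longrightarrow> beq u w"
| ctxt: "beq v v' \<Longrightarrow> beq (u @ v @ w) (u @ v' @ w)"
| cancel: "beq [(g, b), (g, \<not> b)] []"
| rel: "brel l r \<Longrightarrow> beq l r"

datatype tm = X | Op tm tm

fun ev1 :: "tm \<Rightarrow> word" where
  "ev1 X = []"
| "ev1 (Op t1 t2) = ev1 t1 @ dshift (ev1 t2) @ [(A 0, True)]"

end

(*
  B_bullet acts on Cantor space, whose points are infinite binary addresses
  (True = right subtree): the endomorphism partial lets a map act on the right
  half and fixes the left half pointwise, sigma_1 swaps the subtrees at 0 and 10,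
  and a_1 is the rotation 00 -> 0, 01 -> 10, 1 -> 11.  Hence every element of
  Im partial fixes the left half, so u(1)^-1 v(1) in Im partial forces u(1) and
  v(1) to agree there.  But the action of v(1) on the left half determines the
  term v: on 00 it is the action of the left factor, and on 01 it is the action
  of the right factor preceded by a block of 1s.
*)

theory Submission
  imports Defs "HOL-Library.Stream"
begin

type_synonym point = "bool stream"

fun on_right :: "(point \<Rightarrow> point) \<Rightarrow> point \<Rightarrow> point" where
  "on_right f (True ## s) = True ## f s"
| "on_right f (False ## s) = False ## s"

fun sigma1 :: "point \<Rightarrow> point" where
  "sigma1 (False ## s) = True ## False ## s"
| "sigma1 (True ## False ## s) = False ## s"
| "sigma1 (True ## True ## s) = True ## True ## s"

fun a1 :: "point \<Rightarrow> point" where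
  "a1 (False ## False ## s) = False ## s"
| "a1 (False ## True ## s) = True ## False ## s"
| "a1 (True ## s) = True ## True ## s"

fun a1_inv :: "point \<Rightarrow> point" where
  "a1_inv (False ## s) = False ## False ## s"
| "a1_inv (True ## False ## s) = False ## True ## s"
| "a1_inv (True ## True ## s) = True ## s"

lemma on_right_comp: "on_right f (on_right g s) = on_right (\<lambda>t. f (g t)) s"
  by (cases s rule: stream.exhaust, rename_tac b t, case_tac b) simp_all

lemma on_right_ident: "on_right (\<lambda>t. t) s = s"
  by (cases s rule: stream.exhaust, rename_tac b t, case_tac b) simp_all

lemma on_right_inverse:
  assumes "\<And>s. f (g s) = s"
  shows "on_right f (on_right g s) = s"
  using assms by (simp add: on_right_comp on_right_ident)

text \<open>Three letters suffice for all identities below: no map involved reads further.\<close>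
lemma point_eqI3:
  fixes f g :: "point \<Rightarrow> 'a"
  assumes "\<forall>x y z t. f (x ## y ## z ## t) = g (x ## y ## z ## t)"
  shows "f = g"
proof
  fix s :: point
  show "f s = g s" using assms by (metis stream.collapse)
qed

lemma sigma1_involution: "sigma1 \<circ> sigma1 = id"
  by (rule point_eqI3) (simp add: all_bool_eq)

lemma a1_inverse: "a1 \<circ> a1_inv = id" "a1_inv \<circ> a1 = id"
  by (rule point_eqI3, simp add: all_bool_eq)+

text \<open>In this action sigma_i is an involution, so sigma_i and its inverse act alike.\<close>
fun gen_act :: "gen \<Rightarrow> bool \<Rightarrow> point \<Rightarrow> point" where
  "gen_act (S i) b = (on_right ^^ i) sigma1"
| "gen_act (A i) b = (on_right ^^ i) (if b then a1 else a1_inv)"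

fun word_act :: "word \<Rightarrow> point \<Rightarrow> point" where
  "word_act [] = (\<lambda>s. s)"
| "word_act ((g, b) # w) = (\<lambda>s. gen_act g b (word_act w s))"

lemma word_act_append [simp]: "word_act (u @ v) s = word_act u (word_act v s)"
  by (induction u) auto

lemma gen_act_gshift: "gen_act (gshift g) b = on_right (gen_act g b)"
  by (cases g) (simp_all add: funpow_swap1)

lemma funpow_on_right_inverse:
  assumes "\<And>s. f (g s) = s"
  shows "(on_right ^^ n) f ((on_right ^^ n) g s) = s"
  using assms by (induction n arbitrary: s) (simp_all add: on_right_inverse)

lemma gen_act_inverse: "gen_act g b (gen_act g (\<not> b) s) = s"
  using sigma1_involution a1_inverse
  by (cases g) (simp_all add: funpow_on_right_inverse pointfree_idE)

lemma word_act_winv: "word_act w (word_act (winv w) s) = s"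
proof (induction w arbitrary: s)
  case Nil
  show ?case by (simp add: winv_def)
next
  case (Cons p w)
  obtain g b where p: "p = (g, b)" by fastforce
  have "winv (p # w) = winv w @ [(g, \<not> b)]" by (simp add: winv_def p)
  then show ?case by (simp add: p Cons.IH gen_act_inverse)
qed

lemma word_act_dshift: "word_act (dshift w) = on_right (word_act w)"
proof
  fix s
  show "word_act (dshift w) s = on_right (word_act w) s"
    by (induction w arbitrary: s)
      (auto simp: dshift_def gen_act_gshift on_right_comp on_right_ident)
qed

lemma word_act_pw_shift:
  "word_act (pw (map (gshift ^^ n) gs)) = (on_right ^^ n) (word_act (pw gs))"
proof (induction n)
  case (Suc n)
  have "word_act (pw (map (gshift ^^ Suc n) gs)) = word_act (dshift (pw (map (gshift ^^ n) gs)))"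
    by (simp add: pw_def dshift_def comp_def)
  also have "\<dots> = (on_right ^^ Suc n) (word_act (pw gs))"
    by (simp add: word_act_dshift Suc.IH)
  finally show ?case .
qed simp

lemma word_act_pw_shift_eq:
  assumes "word_act (pw gs) = word_act (pw hs)"
  shows "word_act (pw (map (gshift ^^ n) gs)) = word_act (pw (map (gshift ^^ n) hs))"
  using assms by (simp add: word_act_pw_shift)

lemma funpow_gshift [simp]: "(gshift ^^ n) (S i) = S (n + i)" "(gshift ^^ n) (A i) = A (n + i)"
  by (induction n) simp_all

lemma word_act_rel_far_commute:
  "word_act (pw [gshift (gshift g), S 0]) = word_act (pw [S 0, gshift (gshift g)])"
  by (rule point_eqI3) (simp add: pw_def gen_act_gshift all_bool_eq)

lemma word_act_rel_a_shift:
  "word_act (pw [A 0, gshift g]) = word_act (pw [gshift (gshift g), A 0])"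
  by (rule point_eqI3) (simp add: pw_def gen_act_gshift all_bool_eq)

lemma word_act_rel_braid:
  "word_act (pw [S 1, S 0, S 1]) = word_act (pw [S 0, S 1, S 0])"
  by (rule point_eqI3) (simp add: pw_def all_bool_eq)

lemma word_act_rel_sigma_sigma_a:
  "word_act (pw [S 0, S 1, A 0]) = word_act (pw [A 1, S 0])"
  by (rule point_eqI3) (simp add: pw_def all_bool_eq)

lemma word_act_rel_sigma_sigma_a':
  "word_act (pw [S 1, S 0, A 1]) = word_act (pw [A 0, S 0])"
  by (rule point_eqI3) (simp add: pw_def all_bool_eq)

lemma brel_word_act: "brel l r \<Longrightarrow> word_act l = word_act r"
proof (induction rule: brel.induct)
  case (r1 j i)
  then obtain k where "j = i + 2 + k" using le_iff_add by blast
  then show ?case using word_act_pw_shift_eq[OF word_act_rel_far_commute[of "S k"], of i] by simp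
next
  case (r2 j i)
  then obtain k where "j = i + 2 + k" using le_iff_add by blast
  then show ?case using word_act_pw_shift_eq[OF word_act_rel_far_commute[of "A k"], of i] by simp
next
  case (r3 j i)
  then obtain k where "i = j + 1 + k" using le_iff_add by blast
  then show ?case using word_act_pw_shift_eq[OF word_act_rel_a_shift[of "S k"], of j] by simp
next
  case (r4 j i)
  then obtain k where "i = j + 1 + k" using le_iff_add by blast
  then show ?case using word_act_pw_shift_eq[OF word_act_rel_a_shift[of "A k"], of j] by simp
next
  case (r5 j i)
  then show ?case using word_act_pw_shift_eq[OF word_act_rel_braid, of i] by simp
next
  case (r6 j i)
  then show ?case using word_act_pw_shift_eq[OF word_act_rel_sigma_sigma_a, of i] by simp
next
  case (r7 j i)
  then show ?case using word_act_pw_shift_eq[OF word_act_rel_sigma_sigma_a', of i] by simp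
qed

lemma beq_word_act: "beq v w \<Longrightarrow> word_act v = word_act w"
proof (induction rule: beq.induct)
  case (cancel g b)
  show ?case by (simp add: gen_act_inverse)
qed (simp_all add: brel_word_act)

lemma word_act_ev1_right: "word_act (ev1 t) (True ## s) = replicate (Suc (size t)) True @- s"
proof (induction t arbitrary: s)
  case (Op t1 t2)
  have "word_act (ev1 (Op t1 t2)) (True ## s)
      = word_act (ev1 t1) (True ## word_act (ev1 t2) (True ## s))"
    by (simp add: word_act_dshift)
  also have "\<dots> = replicate (Suc (size t1)) True @- replicate (Suc (size t2)) True @- s"
    by (simp only: Op.IH)
  also have "\<dots> = replicate (Suc (size t1) + Suc (size t2)) True @- s"
    by (simp only: shift_append[symmetric] replicate_add)
  also have "\<dots> = replicate (Suc (size (Op t1 t2))) True @- s"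
    by simp
  finally show ?case .
qed simp

lemma word_act_ev1_Op_left_left:
  "word_act (ev1 (Op t1 t2)) (False ## False ## s) = word_act (ev1 t1) (False ## s)"
  by (simp add: word_act_dshift)

lemma word_act_ev1_Op_left_right:
  "word_act (ev1 (Op t1 t2)) (False ## True ## s)
     = replicate (Suc (size t1)) True @- word_act (ev1 t2) (False ## s)"
  by (simp add: word_act_dshift word_act_ev1_right)

lemma ev1_eq_if_agree_on_left:
  assumes "\<And>s. word_act (ev1 u) (False ## s) = word_act (ev1 v) (False ## s)"
  shows "u = v"
  using assms
proof (induction u arbitrary: v)
  case X
  show ?case
  proof (cases v)
    case (Op v1 v2)
    with X.prems[of "True ## _"] show ?thesis
      by (simp only: word_act_ev1_Op_left_right) simp
  qed simp
next
  case (Op u1 u2)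
  show ?case
  proof (cases v)
    case X
    with Op.prems[of "True ## _"] show ?thesis
      by (simp only: word_act_ev1_Op_left_right) simp
  next
    case (Op v1 v2)
    have "u1 = v1"
      using Op.IH(1) Op.prems[of "False ## _"] by (simp only: Op word_act_ev1_Op_left_left)
    moreover have "u2 = v2"
      using Op.IH(2) Op.prems[of "True ## _"]
      by (simp only: Op \<open>u1 = v1\<close> word_act_ev1_Op_left_right shift_left_inj)
    ultimately show ?thesis using Op by simp
  qed
qed

theorem lemma2p9:
  fixes u v :: tm
  assumes "u \<noteq> v"
  shows "\<not> (\<exists>w. beq (winv (ev1 u) @ ev1 v) (dshift w))"
proof
  assume "\<exists>w. beq (winv (ev1 u) @ ev1 v) (dshift w)"
  then obtain w where "beq (winv (ev1 u) @ ev1 v) (dshift w)" ..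
  then have quotient: "word_act (winv (ev1 u) @ ev1 v) = on_right (word_act w)"
    by (simp add: beq_word_act word_act_dshift)
  have "word_act (ev1 v) (False ## s) = word_act (ev1 u) (False ## s)" for s
  proof -
    have "word_act (ev1 v) (False ## s)
        = word_act (ev1 u) (word_act (winv (ev1 u) @ ev1 v) (False ## s))"
      by (simp add: word_act_winv)
    also have "\<dots> = word_act (ev1 u) (False ## s)"
      by (simp add: quotient)
    finally show ?thesis .
  qed
  then have "v = u" by (rule ev1_eq_if_agree_on_left)
  with assms show False by simp
qed

end
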